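(* Let $m$ be an odd positive integer, $k\ge0$ an integer and $N=k+\frac{m-1}{2}$. Then for real $x_0$ and $r>0$ the following identities hold: \[\text{(i)}\quad \sum_{n=0}^{N}\binom{N}{n}(-2)^{-n}D_r(n)[\cos(2x_0r)]=\exp\left(-x_0^2\right)\sum_{n=0}^\infty\frac{2^{2n}n!\,x_0^{2n}}{(2n)!}L_n^{\left(k+\frac m2-1\right)}\left(r^2\right),\] \[\text{(ii)}\quad \sum_{n=0}^{N}\binom{N}{n}(-2)^{-n}D^r(n)[\sin(2x_0r)]=\exp\left(-x_0^2\right)\sum_{n=0}^\infty\frac{2^{2n+1}n!\,x_0^{2n+1}}{(2n+1)!}\,r\,L_n^{\left(k+\frac m2\right)}\left(r^2\right),\] where $L_n^{(a)}$ denote the generalized Laguerre polynomials.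
   Context: The operators act in the variable $r>0$ (with $x_0$ a parameter): $D_r(n)[f]=(r^{-1}\partial_r)^nf$ and $D^r(n)[f]=(\partial_r\circ r^{-1})^nf$ (i.e. $n$-fold application of $f\mapsto\partial_r(f/r)$), with $D_r(0)=D^r(0)=\mathrm{id}$. *)

theory Defs
  imports "HOL-Analysis.Analysis"
begin

definition Dr :: "nat \<Rightarrow> (real \<Rightarrow> real) \<Rightarrow> (real \<Rightarrow> real)" where
  "Dr n f = ((\<lambda>g r. deriv g r / r) ^^ n) f"

definition Dup :: "nat \<Rightarrow> (real \<Rightarrow> real) \<Rightarrow> (real \<Rightarrow> real)" where
  "Dup n f = ((\<lambda>g r. deriv (\<lambda>s. g s / s) r) ^^ n) f"

definition laguerre :: "nat \<Rightarrow> real \<Rightarrow> real \<Rightarrow> real" where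
  "laguerre n a x = (\<Sum>i\<le>n. (-1)^i * ((real n + a) gchoose (n - i)) * x^i / fact i)"

end

theory Submission
  imports Defs "HOL-Computational_Algebra.Formal_Power_Series"
begin

text \<open>
  Write cos (2 x s) and sin (2 x s) / s as power series in s^2 with coefficients
  (-1)^i w(i) x^(2i) / i!. On such series D_r(1), and likewise D^r(1), acts as twice the formal
  derivative of the coefficient sequence, so the left-hand sides become explicit double series
  in x^2 and r^2. After multiplication by exp (x^2) (a Cauchy product) the coefficient of x^(2j)
  is a binomial convolution, which the recurrence w(m+1) (m + a + 1) = w(m) together with the
  Chu-Vandermonde identity collapses to w(j) L_j^(N+a)(r^2). For the cosine
  w(m) = 4^m m! / (2m)! and a = -1/2, for the sine w(m) = 4^m m! / (2m+1)! and a = 1/2.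
\<close>

lemma funpow_diffs: "(diffs ^^ n) c p = fact (p + n) / fact p * (c (p + n) :: real)"
proof (induction n arbitrary: p)
  case 0
  then show ?case by simp
next
  case (Suc n)
  have "(diffs ^^ Suc n) c p = of_nat (Suc p) * (diffs ^^ n) c (Suc p)"
    by (simp add: diffs_def)
  also have "\<dots> = of_nat (Suc p) * (fact (Suc p + n) / fact (Suc p) * c (Suc p + n))"
    using Suc by simp
  also have "\<dots> = fact (p + Suc n) / fact p * c (p + Suc n)"
    by (simp del: fact_Suc of_nat_Suc add: fact_Suc[of p] field_simps)
  finally show ?case .
qed

lemma summable_funpow_diffs:
  fixes c :: "nat \<Rightarrow> real"
  assumes "\<And>z. summable (\<lambda>i. c i * z^i)"
  shows "summable (\<lambda>i. (diffs ^^ n) c i * z^i)"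
proof (induction n arbitrary: z)
  case 0
  then show ?case using assms by simp
next
  case (Suc n)
  then show ?case using termdiff_converges_all[of "(diffs ^^ n) c"] by simp
qed

lemma deriv_powser_square:
  fixes f :: "real \<Rightarrow> real"
  assumes c: "\<And>z. summable (\<lambda>i. c i * z^i)"
    and f: "\<And>s. s \<noteq> 0 \<Longrightarrow> f s = (\<Sum>i. c i * (s^2)^i)"
    and "r \<noteq> 0"
  shows "deriv f r = 2 * r * (\<Sum>i. diffs c i * (r^2)^i)"
proof -
  have "eventually (\<lambda>s. f s = (\<Sum>i. c i * (s^2)^i)) (nhds r)"
    using t1_space_nhds[OF \<open>r \<noteq> 0\<close>] by (rule eventually_mono) (use f in auto)
  then have "deriv f r = deriv (\<lambda>s. \<Sum>i. c i * (s^2)^i) r"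
    by (rule deriv_cong_ev) simp
  also have "\<dots> = (\<Sum>i. diffs c i * (r^2)^i) * (2 * r)"
    by (rule DERIV_imp_deriv, rule DERIV_chain2[OF termdiffs_strong_converges_everywhere[OF c]])
      (auto intro!: derivative_eq_intros)
  finally show ?thesis by simp
qed

lemma Dr_powser_square:
  fixes f :: "real \<Rightarrow> real"
  assumes c: "\<And>z. summable (\<lambda>i. c i * z^i)"
    and f: "\<And>s. s \<noteq> 0 \<Longrightarrow> f s = (\<Sum>i. c i * (s^2)^i)"
    and "r \<noteq> 0"
  shows "(\<lambda>i. 2^n * (diffs ^^ n) c i * (r^2)^i) sums Dr n f r"
proof -
  have c': "summable (\<lambda>i. (2^n * (diffs ^^ n) c i) * z^i)" for n z
    using summable_funpow_diffs[OF c] by (simp add: mult.assoc summable_mult)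
  have "s \<noteq> 0 \<Longrightarrow> Dr n f s = (\<Sum>i. 2^n * (diffs ^^ n) c i * (s^2)^i)" for s
  proof (induction n arbitrary: s)
    case 0
    then show ?case using f by (simp add: Dr_def)
  next
    case (Suc n)
    have "Dr (Suc n) f s = deriv (Dr n f) s / s" by (simp add: Dr_def)
    also have "\<dots> = 2 * (\<Sum>i. diffs (\<lambda>i. 2^n * (diffs ^^ n) c i) i * (s^2)^i)"
      using Suc by (subst deriv_powser_square[OF c']) auto
    also have "\<dots> = (\<Sum>i. 2 * (diffs (\<lambda>i. 2^n * (diffs ^^ n) c i) i * (s^2)^i))"
      using termdiff_converges_all[OF c'] by (simp add: suminf_mult)
    also have "\<dots> = (\<Sum>i. 2^Suc n * (diffs ^^ Suc n) c i * (s^2)^i)"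
      by (simp add: diffs_def mult_ac)
    finally show ?case .
  qed
  then show ?thesis
    using c' \<open>r \<noteq> 0\<close> by (simp add: sums_iff)
qed

lemma Dup_powser_square:
  fixes f :: "real \<Rightarrow> real"
  assumes c: "\<And>z. summable (\<lambda>i. c i * z^i)"
    and f: "\<And>s. s \<noteq> 0 \<Longrightarrow> f s = s * (\<Sum>i. c i * (s^2)^i)"
    and "r \<noteq> 0"
  shows "(\<lambda>i. r * (2^n * (diffs ^^ n) c i * (r^2)^i)) sums Dup n f r"
proof -
  have c': "summable (\<lambda>i. (2^n * (diffs ^^ n) c i) * z^i)" for n z
    using summable_funpow_diffs[OF c] by (simp add: mult.assoc summable_mult)
  have "s \<noteq> 0 \<Longrightarrow> Dup n f s = s * (\<Sum>i. 2^n * (diffs ^^ n) c i * (s^2)^i)" for s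
  proof (induction n arbitrary: s)
    case 0
    then show ?case using f by (simp add: Dup_def)
  next
    case (Suc n)
    have "Dup (Suc n) f s = deriv (\<lambda>t. Dup n f t / t) s" by (simp add: Dup_def)
    also have "\<dots> = s * (2 * (\<Sum>i. diffs (\<lambda>i. 2^n * (diffs ^^ n) c i) i * (s^2)^i))"
      using Suc by (subst deriv_powser_square[OF c']) auto
    also have "\<dots> = s * (\<Sum>i. 2 * (diffs (\<lambda>i. 2^n * (diffs ^^ n) c i) i * (s^2)^i))"
      using termdiff_converges_all[OF c'] by (simp add: suminf_mult)
    also have "\<dots> = s * (\<Sum>i. 2^Suc n * (diffs ^^ Suc n) c i * (s^2)^i)"
      by (simp add: diffs_def mult_ac)
    finally show ?case .
  qed
  then show ?thesis
    using c' \<open>r \<noteq> 0\<close> by (simp add: sums_iff summable_mult suminf_mult)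
qed

lemma weight_mult_gchoose:
  fixes w :: "nat \<Rightarrow> real"
  assumes rec: "\<And>m. w (Suc m) * (real m + a + 1) = w m"
  shows "w (i + k) * ((real (i + k) + a) gchoose k) = w i / fact k"
proof (induction k)
  case 0
  then show ?case by simp
next
  case (Suc k)
  have "of_nat (Suc k) * ((real (i + Suc k) + a) gchoose Suc k)
      = (real (i + k) + a + 1) * ((real (i + k) + a) gchoose k)"
    using gbinomial_absorption[of k "real (i + Suc k) + a"] by (simp add: algebra_simps)
  then have "real (Suc k) * (w (i + Suc k) * ((real (i + Suc k) + a) gchoose Suc k))
      = w (Suc (i + k)) * (real (i + k) + a + 1) * ((real (i + k) + a) gchoose k)"
    by (metis add_Suc_right mult.assoc mult.left_commute)
  also have "\<dots> = w i / fact k"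
    using rec[of "i + k"] Suc by simp
  finally show ?case
    by (simp add: field_simps del: of_nat_Suc)
qed

lemma weight_binomial_convolution:
  fixes w :: "nat \<Rightarrow> real"
  assumes rec: "\<And>m. w (Suc m) * (real m + a + 1) = w m"
  shows "(\<Sum>n\<le>N. real (N choose n) * (if n \<le> k then w (i + n) / fact (k - n) else 0))
       = w (i + k) * ((real (i + k + N) + a) gchoose k)"
proof -
  have "(\<Sum>n\<le>N. real (N choose n) * (if n \<le> k then w (i + n) / fact (k - n) else 0))
      = (\<Sum>n\<le>k. real (N choose n) * (w (i + n) / fact (k - n)))"
    by (rule sum.mono_neutral_cong) auto
  also have "\<dots> = (\<Sum>n=0..k. w (i + k) * ((real N gchoose n) * ((real (i + k) + a) gchoose (k - n))))"
  proof (rule sum.cong)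
    fix n assume "n \<in> {0..k}"
    then have "w (i + n) / fact (k - n) = w (i + k) * ((real (i + k) + a) gchoose (k - n))"
      using weight_mult_gchoose[OF rec, of "i + n" "k - n"] by simp
    then show "real (N choose n) * (w (i + n) / fact (k - n))
        = w (i + k) * ((real N gchoose n) * ((real (i + k) + a) gchoose (k - n)))"
      by (simp add: binomial_gbinomial)
  qed (simp add: atLeast0AtMost)
  also have "\<dots> = w (i + k) * ((real (i + k + N) + a) gchoose k)"
    by (simp only: sum_distrib_left[symmetric] gbinomial_Vandermonde) (simp add: add_ac)
  finally show ?thesis .
qed

lemma sum_atMost_if_le_diff:
  fixes j n :: nat
  shows "(\<Sum>p\<le>j. if n \<le> j - p then g p else 0)
       = (if n \<le> j then (\<Sum>p\<le>j - n. g p) else (0 :: 'a :: comm_monoid_add))"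
proof -
  have "(\<Sum>p\<le>j. if n \<le> j - p then g p else 0) = sum g {p \<in> {..j}. n \<le> j - p}"
    by (rule sum.inter_filter[symmetric]) simp
  also have "{p \<in> {..j}. n \<le> j - p} = (if n \<le> j then {..j - n} else {})"
    by auto
  finally show ?thesis
    by simp
qed

lemma laguerre_binomial_convolution:
  fixes w :: "nat \<Rightarrow> real"
  assumes rec: "\<And>m. w (Suc m) * (real m + a + 1) = w m"
  shows "(\<Sum>n\<le>N. real (N choose n) *
            (if n \<le> j then (\<Sum>p\<le>j - n. (-1)^p * w (p + n) * y^p / (fact p * fact (j - n - p))) else 0))
       = w j * laguerre j (real N + a) y"
proof -
  have "w j * laguerre j (real N + a) y
      = (\<Sum>p\<le>j. (-1)^p * y^p / fact p * (w (p + (j - p)) * ((real (p + (j - p) + N) + a) gchoose (j - p))))"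
    unfolding laguerre_def sum_distrib_left by (intro sum.cong) (auto simp: algebra_simps)
  also have "\<dots> = (\<Sum>p\<le>j. (-1)^p * y^p / fact p *
      (\<Sum>n\<le>N. real (N choose n) * (if n \<le> j - p then w (p + n) / fact (j - p - n) else 0)))"
    by (simp only: weight_binomial_convolution[OF rec])
  also have "\<dots> = (\<Sum>n\<le>N. real (N choose n) *
      (\<Sum>p\<le>j. if n \<le> j - p then (-1)^p * w (p + n) * y^p / (fact p * fact (j - n - p)) else 0))"
    by (simp add: sum_distrib_left sum.swap[of _ "{..N}"] diff_commute)
      (intro sum.cong refl, auto simp: add.commute mult_ac)
  finally show ?thesis
    by (simp add: sum_atMost_if_le_diff)
qed

text \<open>The guard \<open>n \<le> j\<close> removes the terms of negative index, which truncated
  subtraction on nat would otherwise turn into spurious ones.\<close>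

lemma sums_exp_Cauchy_product_shifted:
  fixes t :: "nat \<Rightarrow> real"
  assumes "summable (\<lambda>i. norm (t i))"
  shows "(\<lambda>j. if n \<le> j then (\<Sum>i\<le>j - n. t i * (X^(j - n - i) / fact (j - n - i))) else 0)
           sums (suminf t * exp X)" (is "?f sums _")
proof -
  have "summable (\<lambda>q. norm (X^q / fact q))"
    using summable_exp[of "\<bar>X\<bar>"] by (simp add: power_abs abs_mult divide_inverse mult.commute)
  then have "(\<lambda>j. \<Sum>i\<le>j. t i * (X^(j - i) / fact (j - i))) sums (suminf t * (\<Sum>q. X^q / fact q))"
    by (rule Cauchy_product_sums[OF assms])
  then have "(\<lambda>j. \<Sum>i\<le>j. t i * (X^(j - i) / fact (j - i))) sums (suminf t * exp X)"
    by (simp add: exp_def inverse_eq_divide)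
  then have "(\<lambda>j. ?f (j + n)) sums (suminf t * exp X)"
    by simp
  then show ?thesis
    by (subst (asm) sums_zero_iff_shift) auto
qed

lemma summable_shifted_weight_series:
  fixes w :: "nat \<Rightarrow> real" and X y :: real
  assumes entire: "\<And>z. summable (\<lambda>i. w i * z^i / fact i)"
  shows "summable (\<lambda>p. norm ((-1)^p * w (p + n) * X^(p + n) * y^p / fact p))"
proof -
  have "summable (\<lambda>p. (diffs ^^ n) (\<lambda>i. w i / fact i) p * z^p)" for z
    using entire by (intro summable_funpow_diffs) (simp add: mult_ac)
  then have "summable (\<lambda>p. norm ((diffs ^^ n) (\<lambda>i. w i / fact i) p * (- X * y)^p))"
    by (rule powser_insidea[where x = "\<bar>X * y\<bar> + 1"]) simp
  then have "summable (\<lambda>p. \<bar>X\<bar>^n * norm ((diffs ^^ n) (\<lambda>i. w i / fact i) p * (- X * y)^p))"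
    by (rule summable_mult)
  then show ?thesis
    by (simp add: funpow_diffs power_add abs_mult power_abs mult_ac power_minus' power_mult_distrib)
qed

lemma laguerre_Cauchy_coefficient:
  fixes w :: "nat \<Rightarrow> real" and a X y :: real
  assumes rec: "\<And>m. w (Suc m) * (real m + a + 1) = w m"
  shows "(\<Sum>n\<le>N. real (N choose n) * (if n \<le> j then
            (\<Sum>p\<le>j - n. (-1)^p * w (p + n) * X^(p + n) * y^p / fact p * (X^(j - n - p) / fact (j - n - p)))
          else 0))
       = w j * X^j * laguerre j (real N + a) y"
proof -
  have "(if n \<le> j then
          (\<Sum>p\<le>j - n. (-1)^p * w (p + n) * X^(p + n) * y^p / fact p * (X^(j - n - p) / fact (j - n - p)))
        else 0)
      = X^j * (if n \<le> j then (\<Sum>p\<le>j - n. (-1)^p * w (p + n) * y^p / (fact p * fact (j - n - p))) else 0)"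
    for n
  proof (cases "n \<le> j")
    case True
    have "(-1)^p * w (p + n) * X^(p + n) * y^p / fact p * (X^(j - n - p) / fact (j - n - p))
        = X^j * ((-1)^p * w (p + n) * y^p / (fact p * fact (j - n - p)))" if "p \<le> j - n" for p
    proof -
      have "X^(p + n) * X^(j - n - p) = X^j"
        using that True by (simp flip: power_add)
      then show ?thesis
        by (simp add: field_simps)
    qed
    then have "(\<Sum>p\<le>j - n. (-1)^p * w (p + n) * X^(p + n) * y^p / fact p * (X^(j - n - p) / fact (j - n - p)))
        = (\<Sum>p\<le>j - n. X^j * ((-1)^p * w (p + n) * y^p / (fact p * fact (j - n - p))))"
      by (intro sum.cong) auto
    then show ?thesis
      using True by (simp add: sum_distrib_left)
  qed simp
  then have "(\<Sum>n\<le>N. real (N choose n) * (if n \<le> j then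
          (\<Sum>p\<le>j - n. (-1)^p * w (p + n) * X^(p + n) * y^p / fact p * (X^(j - n - p) / fact (j - n - p)))
        else 0))
      = X^j * (\<Sum>n\<le>N. real (N choose n) *
          (if n \<le> j then (\<Sum>p\<le>j - n. (-1)^p * w (p + n) * y^p / (fact p * fact (j - n - p))) else 0))"
    by (simp add: sum_distrib_left mult.left_commute)
  also have "\<dots> = w j * X^j * laguerre j (real N + a) y"
    by (simp add: laguerre_binomial_convolution[OF rec])
  finally show ?thesis .
qed

lemma laguerre_series:
  fixes w :: "nat \<Rightarrow> real" and a X y :: real
  assumes rec: "\<And>m. w (Suc m) * (real m + a + 1) = w m"
    and entire: "\<And>z. summable (\<lambda>i. w i * z^i / fact i)"
  shows "(\<lambda>j. w j * X^j * laguerre j (real N + a) y)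
           sums (exp X * (\<Sum>n\<le>N. real (N choose n) * (\<Sum>p. (-1)^p * w (p + n) * X^(p + n) * y^p / fact p)))"
proof -
  have "(\<lambda>j. \<Sum>n\<le>N. real (N choose n) * (if n \<le> j then
          (\<Sum>p\<le>j - n. (-1)^p * w (p + n) * X^(p + n) * y^p / fact p * (X^(j - n - p) / fact (j - n - p)))
        else 0))
      sums (\<Sum>n\<le>N. real (N choose n) * ((\<Sum>p. (-1)^p * w (p + n) * X^(p + n) * y^p / fact p) * exp X))"
    using summable_shifted_weight_series[OF entire]
    by (intro sums_sum sums_mult sums_exp_Cauchy_product_shifted)
  then show ?thesis
    by (simp only: laguerre_Cauchy_coefficient[OF rec]) (simp add: sum_distrib_left mult_ac)
qed

lemma funpow_diffs_alternating:
  fixes w :: "nat \<Rightarrow> real"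
  shows "(-2) powi (- int n) * (2^n * (diffs ^^ n) (\<lambda>i. (-1)^i * w i * X^i / fact i) p * y^p)
       = (-1)^p * w (p + n) * X^(p + n) * y^p / fact p"
proof -
  have "(-2::real) powi (- int n) * 2^n = (-1)^n"
    by (simp add: power_int_minus power_mult_distrib[symmetric] field_simps)
  then show ?thesis
    by (simp add: funpow_diffs power_add field_simps)
qed

lemma summable_alternating_weight_series:
  fixes w :: "nat \<Rightarrow> real"
  assumes entire: "\<And>z. summable (\<lambda>i. w i * z^i / fact i)"
  shows "summable (\<lambda>i. (-1)^i * w i * X^i / fact i * z^i)"
  using entire[of "- X * z"] by (simp add: power_mult_distrib power_minus' mult_ac)

lemma Dr_laguerre_sums:
  fixes w :: "nat \<Rightarrow> real" and f :: "real \<Rightarrow> real"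
  assumes rec: "\<And>m. w (Suc m) * (real m + a + 1) = w m"
    and entire: "\<And>z. summable (\<lambda>i. w i * z^i / fact i)"
    and f: "\<And>s. s \<noteq> 0 \<Longrightarrow> f s = (\<Sum>i. (-1)^i * w i * X^i / fact i * (s^2)^i)"
    and "r \<noteq> 0"
  shows "(\<lambda>j. w j * X^j * laguerre j (real N + a) (r^2))
           sums (exp X * (\<Sum>n\<le>N. real (N choose n) * ((-2) powi (- int n) * Dr n f r)))"
proof -
  have Dr_sums: "(\<lambda>p. 2^n * (diffs ^^ n) (\<lambda>i. (-1)^i * w i * X^i / fact i) p * (r^2)^p) sums Dr n f r" for n
    using summable_alternating_weight_series[OF entire] f \<open>r \<noteq> 0\<close> by (rule Dr_powser_square)
  have "(\<Sum>p. (-1)^p * w (p + n) * X^(p + n) * (r^2)^p / fact p) = (-2) powi (- int n) * Dr n f r" for n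
    using sums_mult[OF Dr_sums[of n], of "(-2) powi (- int n)", unfolded funpow_diffs_alternating]
    by (rule sums_unique[symmetric])
  then show ?thesis
    using laguerre_series[OF rec entire, of X N "r^2"] by simp
qed

lemma Dup_laguerre_sums:
  fixes w :: "nat \<Rightarrow> real" and f :: "real \<Rightarrow> real"
  assumes rec: "\<And>m. w (Suc m) * (real m + a + 1) = w m"
    and entire: "\<And>z. summable (\<lambda>i. w i * z^i / fact i)"
    and f: "\<And>s. s \<noteq> 0 \<Longrightarrow> f s = s * (\<Sum>i. b * ((-1)^i * w i * X^i / fact i) * (s^2)^i)"
    and "r \<noteq> 0"
  shows "(\<lambda>j. b * r * (w j * X^j * laguerre j (real N + a) (r^2)))
           sums (exp X * (\<Sum>n\<le>N. real (N choose n) * ((-2) powi (- int n) * Dup n f r)))"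
proof -
  let ?t = "\<lambda>n p. (-1)^p * w (p + n) * X^(p + n) * (r^2)^p / fact p"
  have "summable (\<lambda>i. b * ((-1)^i * w i * X^i / fact i) * z^i)" for z
    using summable_mult[OF summable_alternating_weight_series[OF entire], of b] by (simp add: mult.assoc)
  then have Dup_sums: "(\<lambda>p. r * (2^n * (diffs ^^ n) (\<lambda>i. b * ((-1)^i * w i * X^i / fact i)) p * (r^2)^p))
      sums Dup n f r" for n
    using f \<open>r \<noteq> 0\<close> by (rule Dup_powser_square)
  have coeff: "(-2) powi (- int n) * (r * (2^n * (diffs ^^ n) (\<lambda>i. b * ((-1)^i * w i * X^i / fact i)) p * (r^2)^p))
      = b * r * ?t n p" for n p
  proof -
    have "(-2) powi (- int n) * (r * (2^n * (diffs ^^ n) (\<lambda>i. b * ((-1)^i * w i * X^i / fact i)) p * (r^2)^p))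
        = b * r * ((-2) powi (- int n) * (2^n * (diffs ^^ n) (\<lambda>i. (-1)^i * w i * X^i / fact i) p * (r^2)^p))"
      by (simp add: funpow_diffs mult_ac)
    then show ?thesis
      unfolding funpow_diffs_alternating .
  qed
  have "b * r * (\<Sum>p. ?t n p) = (-2) powi (- int n) * Dup n f r" for n
  proof (rule sums_unique2)
    show "(\<lambda>p. b * r * ?t n p) sums (b * r * (\<Sum>p. ?t n p))"
      using summable_norm_cancel[OF summable_shifted_weight_series[OF entire]]
      by (intro sums_mult summable_sums)
    show "(\<lambda>p. b * r * ?t n p) sums ((-2) powi (- int n) * Dup n f r)"
      using sums_mult[OF Dup_sums[of n], of "(-2) powi (- int n)"] unfolding coeff .
  qed
  moreover have "(\<lambda>j. b * r * (w j * X^j * laguerre j (real N + a) (r^2)))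
      sums (exp X * (\<Sum>n\<le>N. real (N choose n) * (b * r * (\<Sum>p. ?t n p))))"
    using sums_mult[OF laguerre_series[OF rec entire, of X N "r^2"], of "b * r"]
    by (simp add: sum_distrib_left mult_ac)
  ultimately show ?thesis
    by simp
qed

lemma summable_weighted_exp_series:
  fixes w :: "nat \<Rightarrow> real"
  assumes "\<And>i. \<bar>w i\<bar> \<le> C^i"
  shows "summable (\<lambda>i. w i * z^i / fact i)"
proof (rule summable_comparison_test)
  show "summable (\<lambda>i. (C * \<bar>z\<bar>)^i / fact i)"
    using summable_exp[of "C * \<bar>z\<bar>"] by (simp add: divide_inverse mult.commute)
  show "\<exists>N. \<forall>i\<ge>N. norm (w i * z^i / fact i) \<le> (C * \<bar>z\<bar>)^i / fact i"
    using assms by (intro exI allI impI)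
      (auto simp: abs_mult power_abs power_mult_distrib intro!: divide_right_mono mult_right_mono)
qed

definition cos_weight :: "nat \<Rightarrow> real" where
  "cos_weight m = 4^m * fact m / fact (2 * m)"

definition sin_weight :: "nat \<Rightarrow> real" where
  "sin_weight m = 4^m * fact m / fact (2 * m + 1)"

lemma cos_weight_Suc: "cos_weight (Suc m) * (real m + 1/2) = cos_weight m"
proof -
  have "(fact (2 * Suc m) :: real) = (2 * real m + 1) * (2 * (real m + 1) * fact (2 * m))"
    by (simp add: algebra_simps)
  moreover have "(fact (Suc m) :: real) = (real m + 1) * fact m"
    by simp
  ultimately show ?thesis
    unfolding cos_weight_def by (simp only:) (simp add: divide_simps; simp add: algebra_simps)
qed

lemma sin_weight_Suc: "sin_weight (Suc m) * (real m + 3/2) = sin_weight m"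
proof -
  have "(fact (2 * Suc m + 1) :: real) = (2 * real m + 3) * (2 * (real m + 1) * fact (2 * m + 1))"
    by (simp add: algebra_simps)
  moreover have "(fact (Suc m) :: real) = (real m + 1) * fact m"
    by simp
  ultimately show ?thesis
    unfolding sin_weight_def by (simp only:) (simp add: divide_simps; simp add: algebra_simps)
qed

lemma summable_cos_weight_series: "summable (\<lambda>i. cos_weight i * z^i / fact i)"
proof (rule summable_weighted_exp_series[of _ 4])
  show "\<bar>cos_weight i\<bar> \<le> 4^i" for i
    using fact_mono[of i "2 * i", where 'a = real] by (simp add: cos_weight_def divide_le_eq)
qed

lemma summable_sin_weight_series: "summable (\<lambda>i. sin_weight i * z^i / fact i)"
proof (rule summable_weighted_exp_series[of _ 4])
  show "\<bar>sin_weight i\<bar> \<le> 4^i" for i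
    using fact_mono[of i "2 * i + 1", where 'a = real] by (simp add: sin_weight_def divide_le_eq)
qed

lemma cos_double_powser:
  "cos (2 * x * s) = (\<Sum>i. (-1)^i * cos_weight i * (x^2)^i / fact i * (s^2)^i)"
proof -
  have "(-1)^i / fact (2 * i) * (2 * x * s)^(2 * i) = (-1)^i * cos_weight i * (x^2)^i / fact i * (s^2)^i" for i
    by (simp add: cos_weight_def power_mult power_mult_distrib)
  then show ?thesis
    using cos_paired[of "2 * x * s"] by (simp add: sums_iff)
qed

lemma sin_double_powser:
  "sin (2 * x * s) = s * (\<Sum>i. 2 * x * ((-1)^i * sin_weight i * (x^2)^i / fact i) * (s^2)^i)"
proof -
  have "(-1)^i / fact (2 * i + 1) * (2 * x * s)^(2 * i + 1)
      = s * (2 * x * ((-1)^i * sin_weight i * (x^2)^i / fact i) * (s^2)^i)" for i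
    by (simp add: sin_weight_def power_mult power_mult_distrib)
  then have "(\<lambda>i. s * (2 * x * ((-1)^i * sin_weight i * (x^2)^i / fact i) * (s^2)^i)) sums sin (2 * x * s)"
    using sin_paired[of "2 * x * s"] by simp
  moreover have "summable (\<lambda>i. 2 * x * ((-1)^i * sin_weight i * (x^2)^i / fact i) * (s^2)^i)"
    using summable_mult[OF summable_alternating_weight_series[OF summable_sin_weight_series], of "2 * x"]
    by (simp add: mult.assoc)
  then have "(\<lambda>i. s * (2 * x * ((-1)^i * sin_weight i * (x^2)^i / fact i) * (s^2)^i))
      sums (s * (\<Sum>i. 2 * x * ((-1)^i * sin_weight i * (x^2)^i / fact i) * (s^2)^i))"
    by (intro sums_mult summable_sums)
  ultimately show ?thesis
    using sums_unique2 by blast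
qed

lemma exp_minus_mult_exp: "exp (- X) * (exp X * S) = (S :: real)"
  by (simp add: exp_minus field_simps)

lemma Dr_cos_laguerre_sums:
  fixes x r :: real
  assumes "r \<noteq> 0"
  shows "(\<lambda>j. exp (- (x^2)) * (2^(2*j) * fact j * x^(2*j) / fact (2*j)) * laguerre j (real N - 1/2) (r^2))
           sums (\<Sum>n\<le>N. real (N choose n) * (-2) powi (- int n) * Dr n (\<lambda>t. cos (2 * x * t)) r)"
proof -
  have "(\<lambda>j. cos_weight j * (x^2)^j * laguerre j (real N + - (1/2)) (r^2))
      sums (exp (x^2) * (\<Sum>n\<le>N. real (N choose n) * ((-2) powi (- int n) * Dr n (\<lambda>t. cos (2 * x * t)) r)))"
  proof (rule Dr_laguerre_sums[OF _ summable_cos_weight_series])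
    show "cos_weight (Suc m) * (real m + - (1/2) + 1) = cos_weight m" for m
      using cos_weight_Suc[of m] by (simp add: algebra_simps)
  qed (simp_all add: cos_double_powser assms)
  from sums_mult[OF this, of "exp (- (x^2))"]
  have "(\<lambda>j. exp (- (x^2)) * (cos_weight j * (x^2)^j * laguerre j (real N - 1/2) (r^2)))
      sums (\<Sum>n\<le>N. real (N choose n) * ((-2) powi (- int n) * Dr n (\<lambda>t. cos (2 * x * t)) r))"
    by (simp only: exp_minus_mult_exp) simp
  moreover have "exp (- (x^2)) * (cos_weight j * (x^2)^j * L)
      = exp (- (x^2)) * (2^(2*j) * fact j * x^(2*j) / fact (2*j)) * L" for j L
    by (simp add: cos_weight_def power_mult)
  ultimately show ?thesis
    by (simp only: mult.assoc)
qed

lemma Dup_sin_laguerre_sums: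
  fixes x r :: real
  assumes "r \<noteq> 0"
  shows "(\<lambda>j. exp (- (x^2)) * (2^(2*j+1) * fact j * x^(2*j+1) / fact (2*j+1)) * r * laguerre j (real N + 1/2) (r^2))
           sums (\<Sum>n\<le>N. real (N choose n) * (-2) powi (- int n) * Dup n (\<lambda>t. sin (2 * x * t)) r)"
proof -
  have "(\<lambda>j. 2 * x * r * (sin_weight j * (x^2)^j * laguerre j (real N + 1/2) (r^2)))
      sums (exp (x^2) * (\<Sum>n\<le>N. real (N choose n) * ((-2) powi (- int n) * Dup n (\<lambda>t. sin (2 * x * t)) r)))"
  proof (rule Dup_laguerre_sums[OF _ summable_sin_weight_series])
    show "sin_weight (Suc m) * (real m + 1/2 + 1) = sin_weight m" for m
      using sin_weight_Suc[of m] by (simp add: algebra_simps)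
  qed (simp_all add: sin_double_powser assms)
  from sums_mult[OF this, of "exp (- (x^2))"]
  have "(\<lambda>j. exp (- (x^2)) * (2 * x * r * (sin_weight j * (x^2)^j * laguerre j (real N + 1/2) (r^2))))
      sums (\<Sum>n\<le>N. real (N choose n) * ((-2) powi (- int n) * Dup n (\<lambda>t. sin (2 * x * t)) r))"
    by (simp only: exp_minus_mult_exp)
  moreover have "exp (- (x^2)) * (2 * x * r * (sin_weight j * (x^2)^j * L))
      = exp (- (x^2)) * (2^(2*j+1) * fact j * x^(2*j+1) / fact (2*j+1)) * r * L" for j L
  proof -
    have "(x^2)^j = x^(2*j)" and "(4::real)^j = 2^(2*j)"
      by (simp_all add: power_mult)
    then show ?thesis
      by (simp add: sin_weight_def field_simps)
  qed
  ultimately show ?thesis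
    by (simp only: mult.assoc)
qed

theorem corollary1:
  fixes m k :: nat and x r :: real
  assumes "odd m" and "m > 0" and "r > 0"
  defines "N \<equiv> k + (m - 1) div 2"
  shows "((\<lambda>n. exp (- (x^2)) * (2^(2*n) * fact n * x^(2*n) / fact (2*n))
              * laguerre n (real k + real m / 2 - 1) (r^2))
           sums (\<Sum>n\<le>N. real (N choose n) * (-2) powi (- int n) * Dr n (\<lambda>t. cos (2 * x * t)) r)) \<and>
         ((\<lambda>n. exp (- (x^2)) * (2^(2*n+1) * fact n * x^(2*n+1) / fact (2*n+1))
              * r * laguerre n (real k + real m / 2) (r^2))
           sums (\<Sum>n\<le>N. real (N choose n) * (-2) powi (- int n) * Dup n (\<lambda>t. sin (2 * x * t)) r))"
proof -
  obtain t where "m = 2 * t + 1"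
    using \<open>odd m\<close> oddE by blast
  then have a_cos: "real k + real m / 2 - 1 = real N - 1/2" and a_sin: "real k + real m / 2 = real N + 1/2"
    unfolding N_def by simp_all
  have "r \<noteq> 0"
    using \<open>r > 0\<close> by simp
  then show ?thesis
    \<comment> \<open>\<open>a_cos\<close> first: its left-hand side contains that of \<open>a_sin\<close>\<close>
    unfolding a_cos unfolding a_sin by (intro conjI Dr_cos_laguerre_sums Dup_sin_laguerre_sums)
qed

end
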